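(* Let $R$ be a commutative ring with identity that is not an integral domain. If $R$ is not isomorphic to $\mathbb{Z}_2 \times D$ for any integral domain $D$, then $\gamma_t(\Gamma(R)) = \gamma(\Gamma(R))$ (as cardinal numbers).
   Context: All rings are commutative with identity $1$. $Z(R)$ denotes the set of zero-divisors of $R$ and $Z(R)^* = Z(R)\setminus\{0\}$. The zero-divisor graph $\Gamma(R)$ has vertex set $Z(R)^*$; distinct vertices $r,s$ are adjacent iff $rs=0$, and a vertex $x$ is additionally considered adjacent to itself (looped) iff $x^2=0$. A set $X\subseteq Z(R)^*$ is a dominating set if every vertex not in $X$ is adjacent to some element of $X$; it is a total dominating set if every vertex $v$ (including those in $X$) is adjacent to some $x\in X$, where self-adjacency $x=v$ with $x^2=0$ counts. $\gamma(\Gamma(R))$ and $\gamma_t(\Gamma(R))$ are the minimum cardinalities of a dominating set and of a total dominating set, respectively. *)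

theory Defs
  imports "HOL-Algebra.Algebra" "HOL-Number_Theory.Residues" "HOL-Library.Equipollence"
begin

definition zero_divisors :: "('a, 'b) ring_scheme \<Rightarrow> 'a set" where
  "zero_divisors R = {x \<in> carrier R. \<exists>y \<in> carrier R. y \<noteq> \<zero>\<^bsub>R\<^esub> \<and> x \<otimes>\<^bsub>R\<^esub> y = \<zero>\<^bsub>R\<^esub>}"

definition zd_star :: "('a, 'b) ring_scheme \<Rightarrow> 'a set" where
  "zd_star R = zero_divisors R - {\<zero>\<^bsub>R\<^esub>}"

text \<open>Adjacency in Gamma(R): distinct vertices r, s are adjacent iff rs = 0;
  a vertex x is looped iff x^2 = 0.  Both are captured by x y = 0.\<close>
definition zdg_adj :: "('a, 'b) ring_scheme \<Rightarrow> 'a \<Rightarrow> 'a \<Rightarrow> bool" where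
  "zdg_adj R x y \<longleftrightarrow> x \<in> zd_star R \<and> y \<in> zd_star R \<and> x \<otimes>\<^bsub>R\<^esub> y = \<zero>\<^bsub>R\<^esub>"

definition dominating_set :: "('a, 'b) ring_scheme \<Rightarrow> 'a set \<Rightarrow> bool" where
  "dominating_set R S \<longleftrightarrow> S \<subseteq> zd_star R \<and>
     (\<forall>w \<in> zd_star R - S. \<exists>x \<in> S. zdg_adj R x w)"

definition total_dominating_set :: "('a, 'b) ring_scheme \<Rightarrow> 'a set \<Rightarrow> bool" where
  "total_dominating_set R S \<longleftrightarrow> S \<subseteq> zd_star R \<and>
     (\<forall>w \<in> zd_star R. \<exists>x \<in> S. zdg_adj R x w)"

definition min_dominating_set :: "('a, 'b) ring_scheme \<Rightarrow> 'a set \<Rightarrow> bool" where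
  "min_dominating_set R S \<longleftrightarrow> dominating_set R S \<and>
     (\<forall>Y. dominating_set R Y \<longrightarrow> S \<lesssim> Y)"

definition min_total_dominating_set :: "('a, 'b) ring_scheme \<Rightarrow> 'a set \<Rightarrow> bool" where
  "min_total_dominating_set R S \<longleftrightarrow> total_dominating_set R S \<and>
     (\<forall>Y. total_dominating_set R Y \<longrightarrow> S \<lesssim> Y)"

end

theory Submission
  imports Defs
begin

text \<open>
  A total dominating set is dominating, so it suffices to turn a minimum dominating set S into a
  total dominating set of at most the same size.  If S is infinite, adjoin to S one annihilator of
  each of its elements.  If S is finite, choose it so that among dominating sets of no larger size
  it has as few isolated vertices (elements annihilated by no element of S) as possible, and
  suppose some x \<in> S is still isolated.  Exchanging single elements of S for suitable
  annihilators would then reduce the isolated vertices, which rules out every configuration except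
  the following: x is idempotent, Ann(x) = R(1 - x) is a domain, and 1 - x annihilates no element
  of S other than x.  Either Rx = {0, x}, and then R \<cong> \<int>/2\<int> \<times> R(1 - x) is excluded, or
  t \<mapsto> (1 - x) + t embeds Z(Rx)* into S - {x} and {1 - x} \<union> Z(Rx)* is a total dominating set.
\<close>

section \<open>Neighbourhoods in the zero-divisor graph\<close>

definition nbhd :: "('a, 'b) ring_scheme \<Rightarrow> 'a set \<Rightarrow> 'a set" where
  "nbhd R S = {w. \<exists>s\<in>S. zdg_adj R s w}"

text \<open>The isolated vertices of the subgraph of \<Gamma>(R) induced on S (a looped vertex is not isolated).\<close>
definition isolated :: "('a, 'b) ring_scheme \<Rightarrow> 'a set \<Rightarrow> 'a set" where
  "isolated R S = S - nbhd R S"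

lemma nbhd_Un: "nbhd R (A \<union> B) = nbhd R A \<union> nbhd R B"
  by (auto simp: nbhd_def)

lemma nbhd_mono: "A \<subseteq> B \<Longrightarrow> nbhd R A \<subseteq> nbhd R B"
  by (auto simp: nbhd_def)

lemma dominating_set_iff_nbhd:
  "dominating_set R S \<longleftrightarrow> S \<subseteq> zd_star R \<and> zd_star R - S \<subseteq> nbhd R S"
  by (auto simp: dominating_set_def nbhd_def)

lemma total_dominating_set_iff_nbhd:
  "total_dominating_set R S \<longleftrightarrow> S \<subseteq> zd_star R \<and> zd_star R \<subseteq> nbhd R S"
  by (auto simp: total_dominating_set_def nbhd_def)

lemma total_dominating_set_imp_dominating_set:
  "total_dominating_set R S \<Longrightarrow> dominating_set R S"
  by (auto simp: dominating_set_iff_nbhd total_dominating_set_iff_nbhd)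

lemma total_dominating_set_if_no_isolated:
  "dominating_set R S \<Longrightarrow> isolated R S = {} \<Longrightarrow> total_dominating_set R S"
  by (auto simp: dominating_set_iff_nbhd total_dominating_set_iff_nbhd isolated_def)

lemma dominating_set_nbhd_mono:
  assumes "dominating_set R S" and "S' \<subseteq> zd_star R"
    and "S \<subseteq> S' \<union> nbhd R S'" and "nbhd R S \<subseteq> nbhd R S'"
  shows "dominating_set R S'"
  using assms by (auto simp: dominating_set_iff_nbhd)

lemma isolated_nbhd_mono:
  assumes "nbhd R S \<subseteq> nbhd R S'" and "S' - S \<subseteq> nbhd R S'"
  shows "isolated R S' \<subseteq> isolated R S"
  using assms by (auto simp: isolated_def)

definition ann :: "('a, 'b) ring_scheme \<Rightarrow> 'a \<Rightarrow> 'a set" where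
  "ann R a = {r \<in> carrier R. r \<otimes>\<^bsub>R\<^esub> a = \<zero>\<^bsub>R\<^esub>}"

context cring
begin

lemma zd_starI:
  "\<lbrakk>a \<in> carrier R; b \<in> carrier R; a \<noteq> \<zero>; b \<noteq> \<zero>; a \<otimes> b = \<zero>\<rbrakk> \<Longrightarrow> a \<in> zd_star R"
  by (auto simp: zd_star_def zero_divisors_def)

lemma zd_starD: "w \<in> zd_star R \<Longrightarrow> w \<in> carrier R \<and> w \<noteq> \<zero>"
  by (simp add: zd_star_def zero_divisors_def)

lemma zdg_adj_iff:
  "zdg_adj R s w \<longleftrightarrow> s \<in> carrier R \<and> w \<in> carrier R \<and> s \<noteq> \<zero> \<and> w \<noteq> \<zero> \<and> s \<otimes> w = \<zero>"
  using zd_starI[of s w] zd_starI[of w s] zd_starD[of s] zd_starD[of w] m_comm[of s w]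
  unfolding zdg_adj_def by auto

lemma zdg_adj_sym: "zdg_adj R s w \<Longrightarrow> zdg_adj R w s"
  using m_comm[of s w] by (simp add: zdg_adj_iff)

lemma zd_star_ex_ann:
  assumes "w \<in> zd_star R"
  shows "\<exists>y\<in>ann R w. y \<noteq> \<zero>"
proof -
  obtain y where "y \<in> carrier R" "y \<noteq> \<zero>" "w \<otimes> y = \<zero>"
    using assms by (auto simp: zd_star_def zero_divisors_def)
  then show ?thesis
    using zd_starD[OF assms] m_comm[of w y] by (auto simp: ann_def)
qed

lemma zd_star_iff_adj: "w \<in> zd_star R \<longleftrightarrow> (\<exists>s. zdg_adj R s w)"
proof
  assume w: "w \<in> zd_star R"
  then obtain s where "s \<in> ann R w" "s \<noteq> \<zero>"
    using zd_star_ex_ann by blast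
  then have "zdg_adj R s w"
    using zd_starD[OF w] by (simp add: zdg_adj_iff ann_def)
  then show "\<exists>s. zdg_adj R s w" ..
qed (auto simp: zdg_adj_def)

lemma total_dominating_set_zd_star: "total_dominating_set R (zd_star R)"
  using zd_star_iff_adj
  by (auto simp: total_dominating_set_iff_nbhd nbhd_def zdg_adj_def)

lemma dominating_set_exchange:
  assumes dom: "dominating_set R S" and u: "u \<in> S" and adj: "zdg_adj R y u"
    and nbhd_u: "nbhd R {u} \<subseteq> nbhd R (insert y (S - {u}))"
  shows "dominating_set R (insert y (S - {u}))"
    and "isolated R (insert y (S - {u})) \<subseteq> isolated R S"
proof -
  let ?S' = "insert y (S - {u})"
  have "nbhd R S = nbhd R (S - {u}) \<union> nbhd R {u}"
    using u nbhd_Un[of R "S - {u}" "{u}"] by (simp add: insert_absorb)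
  also have "\<dots> \<subseteq> nbhd R ?S'"
    using nbhd_u nbhd_mono[of "S - {u}" ?S'] by blast
  finally have nbhd_S: "nbhd R S \<subseteq> nbhd R ?S'" .
  have "u \<in> nbhd R ?S'"
    using adj by (auto simp: nbhd_def)
  then have "S \<subseteq> ?S' \<union> nbhd R ?S'"
    by blast
  moreover have "?S' \<subseteq> zd_star R"
    using dom adj by (auto simp: dominating_set_iff_nbhd zdg_adj_def)
  ultimately show "dominating_set R ?S'"
    using dominating_set_nbhd_mono[OF dom _ _ nbhd_S] by blast
  have "y \<in> nbhd R ?S'"
    using nbhd_u zdg_adj_sym[OF adj] by (auto simp: nbhd_def)
  then show "isolated R ?S' \<subseteq> isolated R S"
    using isolated_nbhd_mono[OF nbhd_S] by blast
qed

end

section \<open>The annihilator of an idempotent\<close>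

text \<open>For an idempotent x, Ann(x) is the ideal R(1 - x), a ring with identity 1 - x.\<close>
definition ann_ring :: "('a, 'b) ring_scheme \<Rightarrow> 'a \<Rightarrow> 'a ring" where
  "ann_ring R x = \<lparr>carrier = ann R x, monoid.mult = (\<otimes>\<^bsub>R\<^esub>), one = \<one>\<^bsub>R\<^esub> \<ominus>\<^bsub>R\<^esub> x,
     ring.zero = \<zero>\<^bsub>R\<^esub>, ring.add = (\<oplus>\<^bsub>R\<^esub>)\<rparr>"

lemma ann_ring_simps [simp]:
  "carrier (ann_ring R x) = ann R x"
  "(\<otimes>\<^bsub>ann_ring R x\<^esub>) = (\<otimes>\<^bsub>R\<^esub>)"
  "\<one>\<^bsub>ann_ring R x\<^esub> = \<one>\<^bsub>R\<^esub> \<ominus>\<^bsub>R\<^esub> x"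
  "\<zero>\<^bsub>ann_ring R x\<^esub> = \<zero>\<^bsub>R\<^esub>"
  "(\<oplus>\<^bsub>ann_ring R x\<^esub>) = (\<oplus>\<^bsub>R\<^esub>)"
  by (simp_all add: ann_ring_def)

lemma mem_zd_star_ann_ring:
  "t \<in> zd_star (ann_ring R a) \<longleftrightarrow>
     t \<in> ann R a \<and> t \<noteq> \<zero>\<^bsub>R\<^esub> \<and> (\<exists>t'\<in>ann R a. t' \<noteq> \<zero>\<^bsub>R\<^esub> \<and> t \<otimes>\<^bsub>R\<^esub> t' = \<zero>\<^bsub>R\<^esub>)"
  by (auto simp: zd_star_def zero_divisors_def)

lemma RDirProd_simps:
  "carrier (RDirProd R S) = carrier R \<times> carrier S"
  "(a, b) \<otimes>\<^bsub>RDirProd R S\<^esub> (c, d) = (a \<otimes>\<^bsub>R\<^esub> c, b \<otimes>\<^bsub>S\<^esub> d)"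
  "(a, b) \<oplus>\<^bsub>RDirProd R S\<^esub> (c, d) = (a \<oplus>\<^bsub>R\<^esub> c, b \<oplus>\<^bsub>S\<^esub> d)"
  "\<one>\<^bsub>RDirProd R S\<^esub> = (\<one>\<^bsub>R\<^esub>, \<one>\<^bsub>S\<^esub>)"
  by (simp_all add: RDirProd_carrier RDirProd_def DirProd_def monoid.defs)

text \<open>If Rx = {0, x}, this is an isomorphism R \<cong> \<int>/2\<int> \<times> R(1 - x), the first component encoding r x \<in> {0, x}.\<close>
definition peirce_split :: "('a, 'b) ring_scheme \<Rightarrow> 'a \<Rightarrow> 'a \<Rightarrow> int \<times> 'a" where
  "peirce_split R x r = (if r \<otimes>\<^bsub>R\<^esub> x = \<zero>\<^bsub>R\<^esub> then 0 else 1, r \<otimes>\<^bsub>R\<^esub> (\<one>\<^bsub>R\<^esub> \<ominus>\<^bsub>R\<^esub> x))"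

context cring
begin

lemma zd_star_ann_ring_subset: "zd_star (ann_ring R a) \<subseteq> zd_star R"
proof
  fix t assume "t \<in> zd_star (ann_ring R a)"
  then obtain t' where "t \<in> ann R a" "t \<noteq> \<zero>" "t' \<in> ann R a" "t' \<noteq> \<zero>" "t \<otimes> t' = \<zero>"
    by (auto simp: mem_zd_star_ann_ring)
  then show "t \<in> zd_star R"
    using zd_starI[of t t'] by (simp add: ann_def)
qed

context
  fixes x
  assumes x: "x \<in> carrier R" and idem: "x \<otimes> x = x"
begin

lemma complement_idem:
  "\<one> \<ominus> x \<in> carrier R" "(\<one> \<ominus> x) \<otimes> x = \<zero>" "x \<otimes> (\<one> \<ominus> x) = \<zero>"
  "(\<one> \<ominus> x) \<otimes> (\<one> \<ominus> x) = \<one> \<ominus> x"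
  using x idem by algebra+

lemma peirce_decomposition: "r \<in> carrier R \<Longrightarrow> r \<otimes> (\<one> \<ominus> x) \<oplus> r \<otimes> x = r"
  using x by algebra

lemma mem_ann_iff: "r \<in> ann R x \<longleftrightarrow> r \<in> carrier R \<and> r \<otimes> (\<one> \<ominus> x) = r"
  using x peirce_decomposition[of r] complement_idem by (auto simp: ann_def m_assoc)

lemma mem_ann_complement_iff: "r \<in> ann R (\<one> \<ominus> x) \<longleftrightarrow> r \<in> carrier R \<and> r \<otimes> x = r"
  using x peirce_decomposition[of r] complement_idem by (auto simp: ann_def m_assoc)

lemma mult_mem_ann:
  "r \<in> carrier R \<Longrightarrow> r \<otimes> (\<one> \<ominus> x) \<in> ann R x"
  "r \<in> carrier R \<Longrightarrow> r \<otimes> x \<in> ann R (\<one> \<ominus> x)"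
  using x complement_idem by (simp_all add: ann_def m_assoc)

lemma cring_ann_ring: "cring (ann_ring R x)"
proof (rule cringI)
  show "abelian_group (ann_ring R x)"
  proof (rule abelian_groupI, unfold ann_ring_simps)
    fix a assume "a \<in> ann R x"
    then have "\<ominus> a \<in> ann R x \<and> \<ominus> a \<oplus> a = \<zero>"
      using x by (simp add: ann_def l_minus l_neg)
    then show "\<exists>b\<in>ann R x. b \<oplus> a = \<zero>" by blast
  qed (auto simp: ann_def l_distr a_ac x)
  show "comm_monoid (ann_ring R x)"
  proof (rule comm_monoidI, unfold ann_ring_simps)
    fix a b assume "a \<in> ann R x" "b \<in> ann R x"
    then show "a \<otimes> b \<in> ann R x"
      using x by (simp add: ann_def m_assoc)
  next
    fix a assume "a \<in> ann R x"
    then show "(\<one> \<ominus> x) \<otimes> a = a"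
      using mem_ann_iff complement_idem(1) by (simp add: m_comm)
  qed (auto simp: ann_def m_ac complement_idem x)
qed (auto simp: ann_def l_distr)

lemma domain_ann_ring:
  assumes "\<one> \<ominus> x \<noteq> \<zero>"
    and "\<And>c d. c \<in> ann R x \<Longrightarrow> d \<in> ann R x \<Longrightarrow> c \<otimes> d = \<zero> \<Longrightarrow> c = \<zero> \<or> d = \<zero>"
  shows "domain (ann_ring R x)"
  using assms by (intro domain.intro domain_axioms.intro cring_ann_ring) simp_all

context
  assumes x0: "x \<noteq> \<zero>" and small: "ann R (\<one> \<ominus> x) \<subseteq> {\<zero>, x}"
begin

lemma mult_idem_cases: "r \<in> carrier R \<Longrightarrow> r \<otimes> x = \<zero> \<or> r \<otimes> x = x"
  using mult_mem_ann(2)[of r] small by blast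

lemma idem_add_self: "x \<oplus> x = \<zero>"
proof -
  have "x \<oplus> x \<in> ann R (\<one> \<ominus> x)"
    using x complement_idem by (simp add: ann_def l_distr)
  moreover have "x \<oplus> x \<noteq> x"
    using x x0 by simp
  ultimately show ?thesis
    using small by blast
qed

lemma peirce_split_hom: "peirce_split R x \<in> ring_hom R (RDirProd (residue_ring 2) (ann_ring R x))"
proof -
  define \<chi> where "\<chi> r = (if r \<otimes> x = \<zero> then 0 else 1 :: int)" for r
  have split: "peirce_split R x r = (\<chi> r, r \<otimes> (\<one> \<ominus> x))" for r
    by (simp add: peirce_split_def \<chi>_def)
  note e = complement_idem
  show ?thesis
  proof (rule ring_hom_memI, unfold split)
    fix r assume "r \<in> carrier R"
    then show "(\<chi> r, r \<otimes> (\<one> \<ominus> x)) \<in> carrier (RDirProd (residue_ring 2) (ann_ring R x))"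
      using mult_mem_ann(1) by (simp add: \<chi>_def RDirProd_simps residue_ring_def)
  next
    fix r s assume rs: "r \<in> carrier R" "s \<in> carrier R"
    have "r \<otimes> s \<otimes> x = (r \<otimes> x) \<otimes> (s \<otimes> x)"
      using rs x idem by (metis m_assoc m_closed m_lcomm)
    then have "\<chi> (r \<otimes> s) = \<chi> r * \<chi> s mod 2"
      using mult_idem_cases[OF rs(1)] mult_idem_cases[OF rs(2)] x x0 idem by (auto simp: \<chi>_def)
    moreover have "r \<otimes> s \<otimes> (\<one> \<ominus> x) = (r \<otimes> (\<one> \<ominus> x)) \<otimes> (s \<otimes> (\<one> \<ominus> x))"
      using rs e by (metis m_assoc m_closed m_lcomm)
    ultimately show "(\<chi> (r \<otimes> s), r \<otimes> s \<otimes> (\<one> \<ominus> x)) =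
        (\<chi> r, r \<otimes> (\<one> \<ominus> x)) \<otimes>\<^bsub>RDirProd (residue_ring 2) (ann_ring R x)\<^esub> (\<chi> s, s \<otimes> (\<one> \<ominus> x))"
      by (simp add: RDirProd_simps residue_ring_def)
    have "(r \<oplus> s) \<otimes> x = r \<otimes> x \<oplus> s \<otimes> x"
      using rs x by (simp add: l_distr)
    then have "\<chi> (r \<oplus> s) = (\<chi> r + \<chi> s) mod 2"
      using mult_idem_cases[OF rs(1)] mult_idem_cases[OF rs(2)] x x0 idem_add_self
      by (auto simp: \<chi>_def)
    then show "(\<chi> (r \<oplus> s), (r \<oplus> s) \<otimes> (\<one> \<ominus> x)) =
        (\<chi> r, r \<otimes> (\<one> \<ominus> x)) \<oplus>\<^bsub>RDirProd (residue_ring 2) (ann_ring R x)\<^esub> (\<chi> s, s \<otimes> (\<one> \<ominus> x))"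
      using rs e by (simp add: RDirProd_simps residue_ring_def l_distr)
  next
    show "(\<chi> \<one>, \<one> \<otimes> (\<one> \<ominus> x)) = \<one>\<^bsub>RDirProd (residue_ring 2) (ann_ring R x)\<^esub>"
      using x x0 e by (simp add: \<chi>_def RDirProd_simps residue_ring_def)
  qed
qed

lemma peirce_split_bij: "bij_betw (peirce_split R x) (carrier R) ({0..1} \<times> ann R x)"
proof (rule bij_betw_byWitness[where f' = "\<lambda>(b, d). d \<oplus> (if b = 1 then x else \<zero>)"])
  note e = complement_idem
  show "\<forall>r\<in>carrier R. (\<lambda>(b, d). d \<oplus> (if b = 1 then x else \<zero>)) (peirce_split R x r) = r"
  proof
    fix r assume r: "r \<in> carrier R"
    then consider "r \<otimes> x = \<zero>" | "r \<otimes> x = x"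
      using mult_idem_cases by blast
    then show "(\<lambda>(b, d). d \<oplus> (if b = 1 then x else \<zero>)) (peirce_split R x r) = r"
      using peirce_decomposition[OF r] r e x0 by cases (auto simp: peirce_split_def)
  qed
  show "\<forall>p\<in>{0..1} \<times> ann R x. peirce_split R x ((\<lambda>(b, d). d \<oplus> (if b = 1 then x else \<zero>)) p) = p"
  proof
    fix p assume "p \<in> {0..1::int} \<times> ann R x"
    then obtain b d where p: "p = (b, d)" "b = 0 \<or> b = 1" "d \<in> ann R x"
      by fastforce
    then have d: "d \<in> carrier R" "d \<otimes> x = \<zero>" "d \<otimes> (\<one> \<ominus> x) = d"
      using mem_ann_iff by (auto simp: ann_def)
    have "(d \<oplus> x) \<otimes> x = x" "(d \<oplus> x) \<otimes> (\<one> \<ominus> x) = d"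
      using d x idem e by (simp_all add: l_distr)
    then show "peirce_split R x ((\<lambda>(b, d). d \<oplus> (if b = 1 then x else \<zero>)) p) = p"
      using p d x0 by (auto simp: peirce_split_def)
  qed
  show "peirce_split R x ` carrier R \<subseteq> {0..1} \<times> ann R x"
    using mult_mem_ann(1) by (auto simp: peirce_split_def)
  show "(\<lambda>(b, d). d \<oplus> (if b = 1 then x else \<zero>)) ` ({0..1} \<times> ann R x) \<subseteq> carrier R"
    using x by (auto simp: ann_def)
qed

lemma ring_iso_RDirProd_residue_ring_2: "R \<simeq> RDirProd (residue_ring 2) (ann_ring R x)"
  using peirce_split_hom peirce_split_bij
  by (auto simp: is_ring_iso_def ring_iso_def RDirProd_simps residue_ring_def)

end

end

end

section \<open>Infinite dominating sets\<close>

lemma ex_lepoll_least: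
  assumes "P A"
  obtains S where "P S" and "\<And>Y. P Y \<Longrightarrow> lepoll S Y"
proof -
  obtain r where "r \<in> card_of ` Collect P" and "\<forall>r'\<in>card_of ` Collect P. r \<le>o r'"
    using exists_minim_Well_order[of "card_of ` Collect P"] assms card_of_Well_order by blast
  then show thesis
    using that by (auto simp: lepoll_def card_of_ordLeq[symmetric])
qed

lemma (in cring) infinite_dominating_set_imp_total:
  assumes dom: "dominating_set R S" and inf: "infinite S"
  obtains T where "total_dominating_set R T" and "lepoll T S"
proof -
  have "\<forall>s\<in>S. \<exists>y. zdg_adj R y s"
    using dom by (auto simp: dominating_set_iff_nbhd zd_star_iff_adj)
  then obtain g where g: "\<And>s. s \<in> S \<Longrightarrow> zdg_adj R (g s) s"
    by metis
  have "S \<union> g ` S \<subseteq> zd_star R"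
    using dom g by (auto simp: dominating_set_iff_nbhd zdg_adj_def)
  moreover have "zd_star R \<subseteq> nbhd R (S \<union> g ` S)"
  proof
    fix w assume w: "w \<in> zd_star R"
    show "w \<in> nbhd R (S \<union> g ` S)"
    proof (cases "w \<in> S")
      case True
      then show ?thesis
        using g by (auto simp: nbhd_def)
    next
      case False
      then have "w \<in> nbhd R S"
        using dom w by (auto simp: dominating_set_iff_nbhd)
      then show ?thesis
        using nbhd_mono[of S "S \<union> g ` S"] by blast
    qed
  qed
  ultimately have "total_dominating_set R (S \<union> g ` S)"
    by (simp add: total_dominating_set_iff_nbhd)
  moreover have "|S \<union> g ` S| \<le>o |S|"
    by (rule card_of_Un_ordLeq_infinite_Field)
      (auto simp: Field_card_of inf card_of_Card_order ordLeq_refl card_of_image)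
  then have "lepoll (S \<union> g ` S) S"
    by (simp add: lepoll_def card_of_ordLeq[symmetric])
  ultimately show thesis
    using that by blast
qed

section \<open>Finite dominating sets\<close>

locale isolation_minimal_dominating_set = cring R for R :: "('a, 'b) ring_scheme" (structure) +
  fixes S :: "'a set" and x :: 'a
  assumes S_dominating: "dominating_set R S" and finite_S: "finite S"
    and x_isolated: "x \<in> isolated R S"
    and isolated_minimal:
      "\<And>S'. \<lbrakk>dominating_set R S'; finite S'; card S' \<le> card S\<rbrakk> \<Longrightarrow> \<not> isolated R S' \<subset> isolated R S"
begin

lemma S_zd_star: "S \<subseteq> zd_star R"
  using S_dominating by (simp add: dominating_set_iff_nbhd)

lemma S_carrier: "s \<in> S \<Longrightarrow> s \<in> carrier R \<and> s \<noteq> \<zero>"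
  using S_zd_star zd_starD by blast

lemma x_in_S: "x \<in> S"
  using x_isolated by (simp add: isolated_def)

lemma x_carrier: "x \<in> carrier R" and x_nonzero: "x \<noteq> \<zero>"
  using S_carrier x_in_S by auto

lemma mult_x_nonzero: "s \<in> S \<Longrightarrow> s \<otimes> x \<noteq> \<zero>"
  using x_isolated S_carrier x_carrier x_nonzero by (auto simp: isolated_def nbhd_def zdg_adj_iff)

lemma ex_nonzero_ann_x: obtains y where "y \<in> ann R x" and "y \<noteq> \<zero>"
  using zd_star_ex_ann S_zd_star x_in_S by blast

lemma no_improving_exchange:
  assumes u: "u \<in> S" and y: "y \<in> ann R u" "y \<noteq> \<zero>"
    and dominated: "\<And>w. w \<in> ann R u \<Longrightarrow> w \<noteq> \<zero> \<Longrightarrow> \<exists>t\<in>insert y (S - {u}). t \<otimes> w = \<zero>"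
    and x_not_isolated: "x \<notin> isolated R (insert y (S - {u}))"
  shows False
proof -
  let ?S' = "insert y (S - {u})"
  have adj: "zdg_adj R y u"
    using S_carrier[OF u] y by (simp add: ann_def zdg_adj_iff)
  have "nbhd R {u} \<subseteq> nbhd R ?S'"
  proof
    fix w assume "w \<in> nbhd R {u}"
    then have "zdg_adj R w u"
      using zdg_adj_sym by (simp add: nbhd_def)
    then have w: "w \<in> ann R u" "w \<noteq> \<zero>"
      by (auto simp: zdg_adj_iff ann_def)
    then obtain t where t: "t \<in> ?S'" "t \<otimes> w = \<zero>"
      using dominated by blast
    then have "zdg_adj R t w"
      using S_carrier y w by (auto simp: zdg_adj_iff ann_def)
    then show "w \<in> nbhd R ?S'"
      using t(1) by (auto simp: nbhd_def)
  qed
  note exchange = dominating_set_exchange[OF S_dominating u adj this]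
  have "card ?S' \<le> card S"
    using card_Suc_Diff1[OF finite_S u] finite_S by (simp add: card_insert_if)
  moreover have "isolated R ?S' \<subset> isolated R S"
    using exchange(2) x_isolated x_not_isolated by blast
  ultimately show False
    using isolated_minimal exchange(1) finite_S by blast
qed

lemma no_improving_exchange_of_x:
  assumes y: "y \<in> ann R x" "y \<noteq> \<zero>"
    and dominated: "\<And>w. w \<in> ann R x \<Longrightarrow> w \<noteq> \<zero> \<Longrightarrow> \<exists>t\<in>insert y (S - {x}). t \<otimes> w = \<zero>"
  shows False
proof -
  have "y \<noteq> x"
    using y mult_x_nonzero[OF x_in_S] by (auto simp: ann_def)
  then show False
    using no_improving_exchange[OF x_in_S y dominated] by (auto simp: isolated_def)
qed

lemma ann_x_annihilator_trivial:
  assumes z: "z \<in> ann R x" and kills: "\<And>a. a \<in> ann R x \<Longrightarrow> z \<otimes> a = \<zero>"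
  shows "z = \<zero>"
  using no_improving_exchange_of_x[OF z] kills by blast

lemma ann_x_not_subset:
  assumes s: "s \<in> S" "s \<noteq> x"
  shows "\<not> ann R x \<subseteq> ann R s"
proof
  assume sub: "ann R x \<subseteq> ann R s"
  obtain y where y: "y \<in> ann R x" "y \<noteq> \<zero>"
    using ex_nonzero_ann_x .
  show False
  proof (rule no_improving_exchange_of_x[OF y])
    fix w assume "w \<in> ann R x"
    then have "w \<in> carrier R" "w \<otimes> s = \<zero>"
      using sub by (auto simp: ann_def)
    then have "s \<otimes> w = \<zero>"
      using S_carrier[OF s(1)] m_comm by metis
    then show "\<exists>t\<in>insert y (S - {x}). t \<otimes> w = \<zero>"
      using s by blast
  qed
qed

lemma ann_not_subset_ann_x:
  assumes s: "s \<in> S" "s \<noteq> x"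
  shows "\<not> ann R s \<subseteq> ann R x"
proof
  assume sub: "ann R s \<subseteq> ann R x"
  obtain y where y: "y \<in> ann R s" "y \<noteq> \<zero>"
    using zd_star_ex_ann S_zd_star s(1) by blast
  show False
  proof (rule no_improving_exchange[OF s(1) y])
    fix w assume "w \<in> ann R s"
    then have "w \<in> carrier R" "w \<otimes> x = \<zero>"
      using sub by (auto simp: ann_def)
    then have "x \<otimes> w = \<zero>"
      using x_carrier m_comm by metis
    then show "\<exists>t\<in>insert y (S - {s}). t \<otimes> w = \<zero>"
      using s x_in_S by blast
  next
    have "zdg_adj R y x"
      using y sub x_carrier x_nonzero by (auto simp: ann_def zdg_adj_iff)
    then show "x \<notin> isolated R (insert y (S - {s}))"
      by (auto simp: isolated_def nbhd_def)
  qed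
qed

lemma x_idem: "x \<otimes> x = x"
proof (rule ccontr)
  assume "x \<otimes> x \<noteq> x"
  obtain y where y: "y \<in> ann R x" "y \<noteq> \<zero>"
    using ex_nonzero_ann_x .
  have "x \<otimes> x \<otimes> y = \<zero>"
    using y x_carrier by (auto simp: ann_def m_assoc m_comm[of y x])
  then have xx_zd: "x \<otimes> x \<in> zd_star R"
    using zd_starI[of "x \<otimes> x" y] y x_carrier mult_x_nonzero[OF x_in_S] by (simp add: ann_def)
  show False
  proof (cases "x \<otimes> x \<in> S")
    case True
    have "ann R x \<subseteq> ann R (x \<otimes> x)"
      using x_carrier by (auto simp: ann_def m_assoc[symmetric])
    then show False
      using ann_x_not_subset[OF True \<open>x \<otimes> x \<noteq> x\<close>] by blast
  next
    case False
    then obtain s where s: "s \<in> S" "zdg_adj R s (x \<otimes> x)"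
      using S_dominating xx_zd by (auto simp: dominating_set_iff_nbhd nbhd_def)
    then have sx: "s \<otimes> x \<in> ann R x"
      using x_carrier S_carrier[of s] by (simp add: zdg_adj_iff ann_def m_assoc)
    have "s \<otimes> x \<otimes> a = \<zero>" if "a \<in> ann R x" for a
      using that x_carrier S_carrier[OF s(1)]
      by (simp add: ann_def m_assoc m_comm[of x a])
    then have "s \<otimes> x = \<zero>"
      using ann_x_annihilator_trivial[OF sx] by blast
    then show False
      using mult_x_nonzero[OF s(1)] by contradiction
  qed
qed

lemma complement_nonzero: "\<one> \<ominus> x \<noteq> \<zero>"
proof
  assume "\<one> \<ominus> x = \<zero>"
  moreover obtain y where "y \<in> ann R x" "y \<noteq> \<zero>"
    using ex_nonzero_ann_x .
  ultimately show False
    using mem_ann_iff[OF x_carrier x_idem] by auto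
qed

lemma mult_complement_nonzero:
  assumes s: "s \<in> S" "s \<noteq> x"
  shows "s \<otimes> (\<one> \<ominus> x) \<noteq> \<zero>"
proof
  assume se: "s \<otimes> (\<one> \<ominus> x) = \<zero>"
  have "ann R x \<subseteq> ann R s"
  proof
    fix a assume a: "a \<in> ann R x"
    then have "a \<otimes> s = (a \<otimes> (\<one> \<ominus> x)) \<otimes> s"
      using mem_ann_iff[OF x_carrier x_idem] by simp
    also have "\<dots> = a \<otimes> (s \<otimes> (\<one> \<ominus> x))"
      using a S_carrier[OF s(1)] complement_idem(1)[OF x_carrier x_idem]
      by (simp add: ann_def m_assoc m_comm[of s])
    finally show "a \<in> ann R s"
      using a se by (simp add: ann_def)
  qed
  then show False
    using ann_x_not_subset[OF s] by contradiction
qed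

lemma ann_x_no_zero_divisors:
  assumes c: "c \<in> ann R x" "c \<noteq> \<zero>" and d: "d \<in> ann R x" "d \<noteq> \<zero>"
  shows "c \<otimes> d \<noteq> \<zero>"
proof
  assume cd: "c \<otimes> d = \<zero>"
  \<comment> \<open>u is a vertex of S different from x with Ann(u) \<subseteq> Ann(x), as u x = x.\<close>
  define u where "u = c \<oplus> x"
  have u: "u \<in> carrier R" "u \<otimes> x = x"
    using c x_carrier x_idem by (simp_all add: u_def ann_def l_distr)
  have "u \<otimes> d = \<zero>"
    using c d cd x_carrier by (simp add: u_def ann_def l_distr m_comm[of x d])
  moreover have "u \<noteq> \<zero>"
    using u x_nonzero x_carrier by auto
  ultimately have "u \<in> zd_star R"
    using zd_starI[of u d] u d by (auto simp: ann_def)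
  have ann_u: "ann R u \<subseteq> ann R x"
  proof
    fix a assume a: "a \<in> ann R u"
    have "a \<otimes> x = a \<otimes> (u \<otimes> x)"
      using u by simp
    also have "\<dots> = \<zero>"
      using a u x_carrier m_assoc[of a u x] by (auto simp: ann_def)
    finally show "a \<in> ann R x"
      using a by (simp add: ann_def)
  qed
  have "u \<in> S"
  proof (rule ccontr)
    assume "u \<notin> S"
    then obtain s where s: "s \<in> S" "zdg_adj R s u"
      using S_dominating \<open>u \<in> zd_star R\<close> by (auto simp: dominating_set_iff_nbhd nbhd_def)
    then have "s \<in> ann R u"
      using zdg_adj_sym by (simp add: zdg_adj_iff ann_def)
    then show False
      using ann_u mult_x_nonzero[OF s(1)] by (auto simp: ann_def)
  qed
  moreover have "u \<noteq> x"
    using c x_carrier by (auto simp: u_def ann_def)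
  ultimately have "\<not> ann R u \<subseteq> ann R x"
    by (rule ann_not_subset_ann_x)
  with ann_u show False by contradiction
qed

lemma domain_ann_ring_x: "domain (ann_ring R x)"
proof (rule domain_ann_ring[OF x_carrier x_idem complement_nonzero])
  fix c d assume "c \<in> ann R x" "d \<in> ann R x" "c \<otimes> d = \<zero>"
  then show "c = \<zero> \<or> d = \<zero>"
    using ann_x_no_zero_divisors by blast
qed

lemma mem_ann_complement:
  assumes c: "c \<in> carrier R" and w: "w \<in> carrier R" "w \<otimes> (\<one> \<ominus> x) \<noteq> \<zero>"
    and cw: "c \<otimes> w = \<zero>"
  shows "c \<in> ann R (\<one> \<ominus> x)"
proof -
  note e = complement_idem[OF x_carrier x_idem]
  have "(c \<otimes> (\<one> \<ominus> x)) \<otimes> (w \<otimes> (\<one> \<ominus> x)) = (c \<otimes> w) \<otimes> ((\<one> \<ominus> x) \<otimes> (\<one> \<ominus> x))"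
    using c w e(1) by (simp add: m_ac)
  then have "(c \<otimes> (\<one> \<ominus> x)) \<otimes> (w \<otimes> (\<one> \<ominus> x)) = \<zero>"
    using cw e by simp
  then have "c \<otimes> (\<one> \<ominus> x) = \<zero>"
    using ann_x_no_zero_divisors mult_mem_ann(1)[OF x_carrier x_idem] c w by blast
  then show ?thesis
    using c by (simp add: ann_def)
qed

lemma mem_zd_star_complement_ring:
  assumes v: "v \<in> ann R (\<one> \<ominus> x)" "v \<notin> {\<zero>, x}"
  shows "v \<in> zd_star (ann_ring R (\<one> \<ominus> x))"
proof -
  note e = complement_idem[OF x_carrier x_idem]
  have vx: "v \<in> carrier R" "v \<otimes> x = v"
    using v mem_ann_complement_iff[OF x_carrier x_idem] by auto
  have "v \<in> zd_star R"
    using zd_starI[of v "\<one> \<ominus> x"] v e complement_nonzero by (simp add: ann_def)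
  moreover have "v \<notin> S"
    using mult_complement_nonzero v by (auto simp: ann_def)
  ultimately obtain s where s: "s \<in> S" "zdg_adj R s v"
    using S_dominating by (auto simp: dominating_set_iff_nbhd nbhd_def)
  have "v \<otimes> (s \<otimes> x) = s \<otimes> (v \<otimes> x)"
    using vx S_carrier[OF s(1)] x_carrier by (simp add: m_lcomm)
  also have "\<dots> = \<zero>"
    using vx s(2) by (simp add: zdg_adj_iff)
  finally show ?thesis
    using v vx mult_mem_ann(2)[OF x_carrier x_idem] S_carrier[OF s(1)] mult_x_nonzero[OF s(1)]
    by (auto simp: mem_zd_star_ann_ring)
qed

lemma complement_plus_mem_S:
  assumes t: "t \<in> zd_star (ann_ring R (\<one> \<ominus> x))"
  shows "\<one> \<ominus> x \<oplus> t \<in> S - {x}"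
proof -
  note e = complement_idem[OF x_carrier x_idem]
  obtain t' where t: "t \<in> carrier R" "t \<otimes> (\<one> \<ominus> x) = \<zero>" "t \<noteq> \<zero>"
    and t': "t' \<in> carrier R" "t' \<otimes> (\<one> \<ominus> x) = \<zero>" "t' \<noteq> \<zero>" "t \<otimes> t' = \<zero>"
    using assms by (auto simp: mem_zd_star_ann_ring ann_def)
  \<comment> \<open>A neighbour of u in S would kill u (1 - x) = 1 - x and so be x, but x u = t.\<close>
  define u where "u = \<one> \<ominus> x \<oplus> t"
  have u: "u \<in> carrier R" "u \<otimes> (\<one> \<ominus> x) = \<one> \<ominus> x"
    using t e by (simp_all add: u_def l_distr)
  then have "u \<noteq> \<zero>"
    using complement_nonzero e(1) by auto
  moreover have "u \<otimes> t' = \<zero>"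
    using t t' e by (simp add: u_def l_distr m_comm[of "\<one> \<ominus> x" t'])
  ultimately have "u \<in> zd_star R"
    using zd_starI[of u t'] u t' by simp
  have "u \<in> S"
  proof (rule ccontr)
    assume "u \<notin> S"
    then obtain s where s: "s \<in> S" "zdg_adj R s u"
      using S_dominating \<open>u \<in> zd_star R\<close> by (auto simp: dominating_set_iff_nbhd nbhd_def)
    have "s \<otimes> (\<one> \<ominus> x) = (s \<otimes> u) \<otimes> (\<one> \<ominus> x)"
      using u S_carrier[OF s(1)] e(1) by (simp add: m_assoc)
    then have "s = x"
      using mult_complement_nonzero s e(1) by (auto simp: zdg_adj_iff)
    have "t \<otimes> x = t"
      using t mem_ann_complement_iff[OF x_carrier x_idem] by (auto simp: ann_def)
    then have "x \<otimes> u = t"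
      using t e x_carrier by (simp add: u_def r_distr m_comm[of x t])
    then show False
      using s \<open>s = x\<close> t by (simp add: zdg_adj_iff)
  qed
  moreover have "u \<noteq> x"
    using u e complement_nonzero by auto
  ultimately show ?thesis
    by (simp add: u_def)
qed


lemma annihilated_by_complement_set:
  assumes v: "v \<in> zd_star (ann_ring R (\<one> \<ominus> x))" and w: "w \<in> zd_star R"
  shows "\<exists>t\<in>insert (\<one> \<ominus> x) (zd_star (ann_ring R (\<one> \<ominus> x))). t \<otimes> w = \<zero>"
proof -
  note e = complement_idem[OF x_carrier x_idem]
  obtain c where c: "c \<in> carrier R" "c \<otimes> w = \<zero>" "c \<noteq> \<zero>"
    using zd_star_ex_ann[OF w] by (auto simp: ann_def)
  have wc: "w \<in> carrier R" "w \<noteq> \<zero>"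
    using zd_starD[OF w] by auto
  show ?thesis
  proof (cases "w \<otimes> (\<one> \<ominus> x) = \<zero>")
    case True
    then show ?thesis
      using wc e(1) m_comm[of w "\<one> \<ominus> x"] by auto
  next
    case False
    then have c_ann: "c \<in> ann R (\<one> \<ominus> x)"
      using mem_ann_complement c wc by blast
    show ?thesis
    proof (cases "w \<otimes> x = \<zero>")
      case True
      have v': "v \<in> carrier R" "v \<otimes> x = v"
        using v mem_ann_complement_iff[OF x_carrier x_idem] by (auto simp: mem_zd_star_ann_ring)
      then have "v \<otimes> w = v \<otimes> (w \<otimes> x)"
        using wc x_carrier by (simp add: m_assoc[symmetric] m_comm[of w x])
      then show ?thesis
        using True v v' by auto
    next
      case False
      have "c \<otimes> (w \<otimes> x) = \<zero>"
        using c wc x_carrier by (simp add: m_assoc[symmetric])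
      then have "c \<in> zd_star (ann_ring R (\<one> \<ominus> x))"
        using c c_ann False mult_mem_ann(2)[OF x_carrier x_idem] wc
        by (auto simp: mem_zd_star_ann_ring)
      then show ?thesis
        using c by blast
    qed
  qed
qed

text \<open>Since Ann(1 - x) = Rx, the set below is {1 - x} \<union> Z(Rx)*.\<close>
lemma total_dominating_set_complement:
  assumes v: "v \<in> zd_star (ann_ring R (\<one> \<ominus> x))"
  shows "total_dominating_set R (insert (\<one> \<ominus> x) (zd_star (ann_ring R (\<one> \<ominus> x))))"
    (is "total_dominating_set R ?T")
proof -
  have "\<one> \<ominus> x \<in> zd_star R"
    using zd_starI[of "\<one> \<ominus> x" x] complement_idem[OF x_carrier x_idem] complement_nonzero
      x_carrier x_nonzero
    by simp
  then have T: "?T \<subseteq> zd_star R"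
    using zd_star_ann_ring_subset by blast
  have "w \<in> nbhd R ?T" if w: "w \<in> zd_star R" for w
  proof -
    obtain t where t: "t \<in> ?T" "t \<otimes> w = \<zero>"
      using annihilated_by_complement_set[OF v w] by blast
    then have "zdg_adj R t w"
      using T zd_starD[of t] zd_starD[OF w] by (auto simp: zdg_adj_iff)
    then show ?thesis
      using t(1) by (auto simp: nbhd_def)
  qed
  with T show ?thesis
    by (auto simp: total_dominating_set_iff_nbhd)
qed

lemma card_complement_set:
  "finite (zd_star (ann_ring R (\<one> \<ominus> x)))"
  "card (insert (\<one> \<ominus> x) (zd_star (ann_ring R (\<one> \<ominus> x)))) \<le> card S"
proof -
  let ?Z = "zd_star (ann_ring R (\<one> \<ominus> x))"
  have inj: "inj_on (\<lambda>t. \<one> \<ominus> x \<oplus> t) ?Z"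
  proof (rule inj_onI)
    fix a b assume "a \<in> ?Z" "b \<in> ?Z" and eq: "\<one> \<ominus> x \<oplus> a = \<one> \<ominus> x \<oplus> b"
    then have "a \<in> carrier R" "b \<in> carrier R"
      by (auto simp: mem_zd_star_ann_ring ann_def)
    then show "a = b"
      using eq add.right_cancel[of "\<one> \<ominus> x" a b] complement_idem(1)[OF x_carrier x_idem]
      by (simp add: a_comm)
  qed
  have img: "(\<lambda>t. \<one> \<ominus> x \<oplus> t) ` ?Z \<subseteq> S - {x}"
    using complement_plus_mem_S by (simp add: image_subset_iff)
  have "finite ?Z" and "card ?Z \<le> card (S - {x})"
    using inj_on_finite[OF inj img] card_inj_on_le[OF inj img] finite_S by simp_all
  then show "finite ?Z" and "card (insert (\<one> \<ominus> x) ?Z) \<le> card S"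
    using card_Suc_Diff1[OF finite_S x_in_S] by (simp_all add: card_insert_if)
qed

lemma total_dominating_set_or_split:
  obtains T where "total_dominating_set R T" "finite T" "card T \<le> card S"
  | "domain (ann_ring R x)" "R \<simeq> RDirProd (residue_ring 2) (ann_ring R x)"
proof (cases "ann R (\<one> \<ominus> x) \<subseteq> {\<zero>, x}")
  case True
  then show thesis
    using that(2) domain_ann_ring_x ring_iso_RDirProd_residue_ring_2[OF x_carrier x_idem x_nonzero]
    by blast
next
  case False
  then obtain v where "v \<in> ann R (\<one> \<ominus> x)" "v \<notin> {\<zero>, x}"
    by blast
  then have "v \<in> zd_star (ann_ring R (\<one> \<ominus> x))"
    by (rule mem_zd_star_complement_ring)
  then show thesis
    using that(1)[OF total_dominating_set_complement] card_complement_set by simp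
qed

end

context cring
begin

lemma finite_dominating_set_imp_total:
  assumes no_split: "\<And>D :: 'a ring. domain D \<Longrightarrow> \<not> R \<simeq> RDirProd (residue_ring 2) D"
  shows "finite S \<Longrightarrow> dominating_set R S \<Longrightarrow>
    \<exists>T. total_dominating_set R T \<and> finite T \<and> card T \<le> card S"
proof (induction "card (isolated R S)" arbitrary: S rule: less_induct)
  case less
  show ?case
  proof (cases "isolated R S = {}")
    case True
    then show ?thesis
      using total_dominating_set_if_no_isolated less.prems by blast
  next
    case False
    then obtain x where x: "x \<in> isolated R S"
      by blast
    show ?thesis
    proof (cases "\<exists>S'. dominating_set R S' \<and> finite S' \<and> card S' \<le> card S \<and> isolated R S' \<subset> isolated R S")
      case True
      then obtain S' where S': "dominating_set R S'" "finite S'" "card S' \<le> card S"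
        and smaller: "isolated R S' \<subset> isolated R S"
        by blast
      have "finite (isolated R S)"
        using less.prems(1) by (simp add: isolated_def)
      then have "card (isolated R S') < card (isolated R S)"
        using smaller by (rule psubset_card_mono)
      then obtain T where "total_dominating_set R T" "finite T" "card T \<le> card S'"
        using less.hyps S'(1,2) by blast
      then show ?thesis
        using S'(3) le_trans by blast
    next
      case False
      then interpret isolation_minimal_dominating_set R S x
        using less.prems x by unfold_locales blast+
      show ?thesis
        by (cases rule: total_dominating_set_or_split) (use no_split in blast)+
    qed
  qed
qed

end

theorem theorem1p1:
  fixes R :: "'a ring"
  assumes "cring R"
    and "\<not> domain R"
    and "\<And>D :: 'a ring. domain D \<Longrightarrow> \<not> (R \<simeq> RDirProd (residue_ring 2) D)"
  shows "\<exists>S T. min_dominating_set R S \<and> min_total_dominating_set R T \<and> T \<approx> S"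
proof -
  interpret cring R by (rule assms(1))
  obtain S where S: "dominating_set R S" "\<And>Y. dominating_set R Y \<Longrightarrow> lepoll S Y"
    using ex_lepoll_least total_dominating_set_imp_dominating_set[OF total_dominating_set_zd_star]
    by blast
  obtain T where T: "total_dominating_set R T" "\<And>Y. total_dominating_set R Y \<Longrightarrow> lepoll T Y"
    using ex_lepoll_least total_dominating_set_zd_star by blast
  obtain T' where T': "total_dominating_set R T'" "lepoll T' S"
  proof (cases "finite S")
    case True
    then show thesis
      using finite_dominating_set_imp_total[OF assms(3) True S(1)] lepoll_iff_card_le that by blast
  next
    case False
    then show thesis
      using infinite_dominating_set_imp_total[OF S(1)] that by blast
  qed
  have "T \<approx> S"
    using T(2)[OF T'(1)] T'(2) S(2)[OF total_dominating_set_imp_dominating_set[OF T(1)]]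
    by (blast intro: lepoll_antisym lepoll_trans)
  then show ?thesis
    using S T by (auto simp: min_dominating_set_def min_total_dominating_set_def)
qed

end
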